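(* Let $M\in\mathbb N$, let $X(M)$ be the subshift defined below and let $E$ be its code defined below. Then the generating function $f(E,z)=\sum_{u\in E}z^{|u|}$ equals $\frac12\left(1-\sqrt{1-8Mz^2}\right)$.
   Context: Let $\Sigma_1=\{\lambda,\xi,\rho_1,\dots,\rho_M,\eta_1,\dots,\eta_M\}$. $\mathcal M_1(M)$ is the monoid with zero generated by $\Sigma_1$ and an identity $\mathbf 1$, subject only to the relations $\lambda\rho_i=\mathbf 1$, $\lambda\eta_i=0$, $\xi\eta_i=\mathbf 1$, $\xi\rho_i=0$ ($1\le i\le M$), $\mathbf 1$ is the identity and $0$ is absorbing; no other relations. $\mathit{red}:\Sigma_1^*\to\mathcal M_1(M)$ sends a word to the product of its letters (empty word to $\mathbf 1$). $X(M)=\{x\in\Sigma_1^{\mathbb Z}:\mathit{red}(x_i\cdots x_j)\neq 0\ \forall i\le j\}$. The code $E$ is the set of blocks $w$ of $X(M)$ of the form $w=avb$ with $a\in\{\lambda,\xi\}$, $b\in\{\rho_1,\dots,\rho_M,\eta_1,\dots,\eta_M\}$, $\mathit{red}(ab)=\mathbf 1$, and $v$ a word with $\mathit{red}(v)=\mathbf 1$. $|u|$ is the length of $u$; the generating function is a formal power series. *)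

theory Defs
  imports "HOL-Computational_Algebra.Formal_Power_Series"
begin

datatype letter = Lam | Xi | Rho nat | Eta nat

definition Sigma1 :: "nat \<Rightarrow> letter set" where
  "Sigma1 M = {Lam, Xi} \<union> Rho ` {1..M} \<union> Eta ` {1..M}"

fun is_open :: "letter \<Rightarrow> bool" where
  "is_open Lam = True" | "is_open Xi = True" | "is_open _ = False"

fun is_close :: "letter \<Rightarrow> bool" where
  "is_close (Rho _) = True" | "is_close (Eta _) = True" | "is_close _ = False"

fun matches :: "letter \<Rightarrow> letter \<Rightarrow> bool" where
  "matches Lam (Rho _) = True" | "matches Xi (Eta _) = True" | "matches _ _ = False"

text \<open>Elements of the monoid with zero M_1(M) are represented by normal forms:
  None is the zero, Some s is the reduced word (stored reversed, as a stack);
  Some [] is the identity. Appending a letter to a normal form applies the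
  defining relations lambda rho_i = 1, xi eta_i = 1, lambda eta_i = 0, xi rho_i = 0.\<close>
fun step :: "letter list option \<Rightarrow> letter \<Rightarrow> letter list option" where
  "step None _ = None"
| "step (Some []) b = Some [b]"
| "step (Some (a # s)) b =
     (if is_open a \<and> is_close b then (if matches a b then Some s else None)
      else Some (b # a # s))"

definition red :: "letter list \<Rightarrow> letter list option" where
  "red w = foldl step (Some []) w"

abbreviation zero_M :: "letter list option" where "zero_M \<equiv> None"
abbreviation one_M :: "letter list option" where "one_M \<equiv> Some []"

definition XM :: "nat \<Rightarrow> (int \<Rightarrow> letter) set" where
  "XM M = {x. (\<forall>i. x i \<in> Sigma1 M) \<and>
              (\<forall>i j. i \<le> j \<longrightarrow> red (map x [i..j]) \<noteq> zero_M)}"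

definition blocks :: "nat \<Rightarrow> letter list set" where
  "blocks M = {w. \<exists>x \<in> XM M. \<exists>i::int. w = map (\<lambda>k. x (i + int k)) [0..<length w]}"

definition codeE :: "nat \<Rightarrow> letter list set" where
  "codeE M = {w \<in> blocks M. \<exists>a v b. w = a # v @ [b] \<and> a \<in> {Lam, Xi} \<and>
       b \<in> Rho ` {1..M} \<union> Eta ` {1..M} \<and> red [a, b] = one_M \<and> red v = one_M}"

definition genfun :: "letter list set \<Rightarrow> real fps" where
  "genfun E = Abs_fps (\<lambda>n. of_nat (card {u \<in> E. length u = n}))"

end

(* Read lambda, xi as opening and rho_i, eta_i as closing brackets; red v = 1 says that v
   is a well-bracketed (Dyck) word. A word of E is then a prime Dyck word a v b, and every
   nonempty Dyck word w is a block of X(M), namely of the periodic point ...www...: each of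
   its segments is a factor of some power w^K, which reduces to 1, and 0 is absorbing.
   Splitting off the last prime factor, every Dyck word is uniquely a Dyck word followed by a
   prime one, so with D the generating function of Dyck words, D = 1 + D E and E = 2M z^2 D.
   Hence E^2 = E - 2M z^2, i.e. (1 - 2E)^2 = 1 - 8M z^2, and 1 - 2E is the square root with
   constant term 1. *)

theory Submission
  imports Defs
begin

lemma foldl_step_None [simp]: "foldl step None v = None"
  by (induction v) auto

lemma red_Nil [simp]: "red [] = Some []"
  by (simp add: red_def)

lemma red_append: "red (u @ v) = foldl step (red u) v"
  by (simp add: red_def)

lemma red_append_one: "red u = Some [] \<Longrightarrow> red (u @ v) = red v"
  by (simp add: red_def)

lemma open_not_close: "is_open a \<Longrightarrow> \<not> is_close a"
  by (cases a) auto

lemma matches_open_close: "matches a b \<Longrightarrow> is_open a \<and> is_close b"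
  by (cases a; cases b) auto

lemma step_open: "is_open a \<Longrightarrow> step (Some s) a = Some (a # s)"
  by (cases s) (auto simp: open_not_close)

lemma step_append_stack:
  "t \<noteq> [] \<Longrightarrow> step (Some (t @ s)) c = map_option (\<lambda>r. r @ s) (step (Some t) c)"
  by (cases t) auto

lemma foldl_step_append_closer:
  assumes "\<not> is_open c"
  shows "foldl step (Some (t @ [c])) v = map_option (\<lambda>r. r @ [c]) (foldl step (Some t) v)"
proof (induction v arbitrary: t)
  case (Cons d v)
  have "step (Some (t @ [c])) d = map_option (\<lambda>r. r @ [c]) (step (Some t) d)"
    using assms by (cases t) auto
  then show ?case
    using Cons by (cases "step (Some t) d") auto
qed simp

text \<open>As long as the run from \<open>t\<close> keeps a nonempty stack, the run from \<open>t @ s\<close> is the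
  same run on top of \<open>s\<close>. When the stack of the former is empty and a closer \<open>c\<close> arrives,
  the latter either fails at once or cancels \<open>c\<close> against the top of \<open>s\<close>, while the former
  continues above the inert letter \<open>c\<close>.\<close>
lemma foldl_step_None_append_stack:
  "foldl step (Some t) v = None \<Longrightarrow> foldl step (Some (t @ s)) v = None"
proof (induction v arbitrary: t s)
  case (Cons c v)
  show ?case
  proof (cases "t = []")
    case False
    then show ?thesis
      using Cons step_append_stack[OF False, of s c] by (cases "step (Some t) c") auto
  next
    case t: True
    then have run_c: "foldl step (Some [c]) v = None"
      using Cons.prems by simp
    show ?thesis
    proof (cases s)
      case (Cons a s')
      consider "is_open a" "is_close c" "matches a c" | "is_open a" "is_close c" "\<not> matches a c"
        | "\<not> (is_open a \<and> is_close c)"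
        by blast
      then show ?thesis
      proof cases
        case 1
        then have "foldl step (Some []) v = None"
          using run_c foldl_step_append_closer[of c "[]" v] open_not_close by auto
        then have "foldl step (Some s') v = None"
          using Cons.IH[of "[]" s'] by simp
        then show ?thesis using 1 t Cons by simp
      next
        case 2
        then show ?thesis using t Cons by simp
      next
        case 3
        then show ?thesis using t Cons Cons.IH[OF run_c, of s] by auto
      qed
    qed (use Cons.prems t in simp)
  qed
qed simp

lemma red_None_factor:
  assumes "red v = None"
  shows "red (u @ v @ w) = None"
proof (cases "red u")
  case (Some s)
  have "foldl step (Some ([] @ s)) v = None"
    using assms foldl_step_None_append_stack[of "[]" v s] by (simp add: red_def)
  then show ?thesis
    using Some by (simp add: red_append)
qed (simp add: red_append)

text \<open>\<open>dyck_prefix v s\<close>: reading \<open>v\<close> never gives 0 or leaves an unmatched closer, and \<open>s\<close> lists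
  the unmatched openers of \<open>v\<close>, innermost first.\<close>
inductive dyck_prefix :: "letter list \<Rightarrow> letter list \<Rightarrow> bool" where
  dyck_prefix_Nil: "dyck_prefix [] []"
| dyck_prefix_push: "dyck_prefix v s \<Longrightarrow> is_open a \<Longrightarrow> dyck_prefix (v @ [a]) (a # s)"
| dyck_prefix_pop: "dyck_prefix v (a # s) \<Longrightarrow> matches a b \<Longrightarrow> dyck_prefix (v @ [b]) s"

lemma dyck_prefix_run: "dyck_prefix v s \<Longrightarrow> foldl step (Some r) v = Some (s @ r)"
  by (induction rule: dyck_prefix.induct) (auto simp: step_open dest: matches_open_close)

lemma dyck_prefix_if_red:
  "red v = Some s \<Longrightarrow> \<forall>x\<in>set s. is_open x \<Longrightarrow> dyck_prefix v s"
proof (induction v arbitrary: s rule: rev_induct)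
  case Nil
  then show ?case by (simp add: red_def dyck_prefix_Nil)
next
  case (snoc c v)
  obtain t where t: "red v = Some t"
    using snoc.prems(1) by (cases "red v") (auto simp: red_append)
  have s: "step (Some t) c = Some s"
    using snoc.prems(1) t by (simp add: red_append)
  show ?case
  proof (cases "t \<noteq> [] \<and> is_open (hd t) \<and> is_close c")
    case True
    then obtain a where "t = a # s" "matches a c" "is_open a"
      using s by (cases t) (auto split: if_splits)
    then show ?thesis
      using snoc t dyck_prefix_pop by auto
  next
    case False
    then have "s = c # t"
      using s by (cases t) auto
    then show ?thesis
      using snoc t dyck_prefix_push by auto
  qed
qed

lemma closer_persists:
  assumes "\<not> is_open c"
  shows "c \<in> set s \<Longrightarrow> foldl step (Some s) v = Some s' \<Longrightarrow> c \<in> set s'"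
proof (induction v arbitrary: s)
  case (Cons d v)
  obtain s1 where s1: "step (Some s) d = Some s1"
    using Cons.prems(2) by (cases "step (Some s) d") auto
  have "c \<in> set s1"
    using Cons.prems(1) s1 assms by (cases s) (auto split: if_splits)
  then show ?case
    using Cons.IH Cons.prems(2) s1 by simp
qed simp

lemma dyck_prefix_if_red_append: "red (v @ z) = Some [] \<Longrightarrow> \<exists>s. dyck_prefix v s"
proof -
  assume vz: "red (v @ z) = Some []"
  then obtain s where s: "red v = Some s"
    by (cases "red v") (auto simp: red_append)
  have "is_open x" if "x \<in> set s" for x
    using closer_persists[of x s z "[]"] that vz s by (auto simp: red_append)
  then show ?thesis
    using dyck_prefix_if_red[OF s] by blast
qed

lemma dyck_prefix_split_bottom:
  "dyck_prefix v (t @ [a]) \<Longrightarrow>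
     \<exists>u v'. v = u @ a # v' \<and> dyck_prefix u [] \<and> dyck_prefix v' t"
proof (induction v "t @ [a]" arbitrary: t rule: dyck_prefix.induct)
  case (dyck_prefix_push v s c)
  show ?case
  proof (cases t)
    case Nil
    then show ?thesis
      using dyck_prefix_push dyck_prefix_Nil by fastforce
  next
    case (Cons c' t')
    then obtain u v' where "v = u @ a # v'" "dyck_prefix u []" "dyck_prefix v' t'"
      using dyck_prefix_push by auto
    then show ?thesis
      using Cons dyck_prefix_push dyck_prefix.dyck_prefix_push[of v' t' c] by fastforce
  qed
next
  case (dyck_prefix_pop v c b)
  then obtain u v' where "v = u @ a # v'" "dyck_prefix u []" "dyck_prefix v' (c # t)"
    by fastforce
  then show ?case
    using dyck_prefix_pop dyck_prefix.dyck_prefix_pop[of v' c t b] by fastforce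
qed simp

definition Dyck :: "nat \<Rightarrow> letter list set" where
  "Dyck M = {v. set v \<subseteq> Sigma1 M \<and> red v = Some []}"

definition bracket_pairs :: "nat \<Rightarrow> (letter \<times> letter) set" where
  "bracket_pairs M = (\<lambda>i. (Lam, Rho i)) ` {1..M} \<union> (\<lambda>i. (Xi, Eta i)) ` {1..M}"

definition prime_Dyck :: "nat \<Rightarrow> letter list set" where
  "prime_Dyck M = {a # v @ [b] | a b v. (a, b) \<in> bracket_pairs M \<and> v \<in> Dyck M}"

lemma bracket_pairs_iff:
  "(a, b) \<in> bracket_pairs M \<longleftrightarrow> a \<in> Sigma1 M \<and> b \<in> Sigma1 M \<and> matches a b"
  by (cases a; cases b) (auto simp: bracket_pairs_def Sigma1_def)

lemma card_bracket_pairs: "card (bracket_pairs M) = 2 * M"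
proof -
  have "card (bracket_pairs M) = card ((\<lambda>i. (Lam, Rho i)) ` {1..M}) + card ((\<lambda>i. (Xi, Eta i)) ` {1..M})"
    unfolding bracket_pairs_def by (rule card_Un_disjoint) auto
  also have "\<dots> = M + M"
    by (simp add: card_image inj_on_def)
  finally show ?thesis by simp
qed

lemma foldl_step_if_red_one: "red v = Some [] \<Longrightarrow> foldl step (Some r) v = Some r"
  using dyck_prefix_if_red[of v "[]"] dyck_prefix_run by fastforce

lemma Nil_in_Dyck: "[] \<in> Dyck M"
  by (simp add: Dyck_def)

lemma Dyck_append: "u \<in> Dyck M \<Longrightarrow> v \<in> Dyck M \<Longrightarrow> u @ v \<in> Dyck M"
  by (simp add: Dyck_def red_append_one)

lemma prime_Dyck_subset_Dyck: "prime_Dyck M \<subseteq> Dyck M"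
proof
  fix w assume "w \<in> prime_Dyck M"
  then obtain a b v where w: "w = a # v @ [b]" "(a, b) \<in> bracket_pairs M" "v \<in> Dyck M"
    unfolding prime_Dyck_def by blast
  then have "red w = step (Some [a]) b"
    using foldl_step_if_red_one[of v "[a]"] by (simp add: Dyck_def red_def)
  then show "w \<in> Dyck M"
    using w by (auto simp: Dyck_def bracket_pairs_iff dest: matches_open_close)
qed

lemma red_open_Cons_Dyck_prefix_ne_one:
  "red (v @ z) = Some [] \<Longrightarrow> is_open a \<Longrightarrow> red (a # v) \<noteq> Some []"
  using dyck_prefix_if_red_append dyck_prefix_run by (fastforce simp: red_def)

lemma prime_Dyck_no_Dyck_prefix:
  assumes "e \<in> prime_Dyck M" "e = x @ y" "x \<noteq> []" "y \<noteq> []"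
  shows "red x \<noteq> Some []"
proof -
  obtain a b v where e: "e = a # v @ [b]" "(a, b) \<in> bracket_pairs M" "v \<in> Dyck M"
    using assms(1) unfolding prime_Dyck_def by blast
  obtain v' where x: "x = a # v'"
    using assms(2,3) e(1) by (cases x) auto
  have vb: "v @ [b] = v' @ y"
    using assms(2) e(1) x by simp
  then have "length v + 1 = length v' + length y"
    by (metis length_append length_append_singleton Suc_eq_plus1)
  then have "length v' \<le> length v"
    using assms(4) by (cases y) auto
  then have "v' = take (length v') v"
    using arg_cong[OF vb, of "take (length v')"] by simp
  then have "red (v' @ drop (length v') v) = Some []"
    using e(3) append_take_drop_id[of "length v'" v] by (simp add: Dyck_def)
  then show ?thesis
    using red_open_Cons_Dyck_prefix_ne_one e(2) x by (auto simp: bracket_pairs_iff dest: matches_open_close)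
qed

lemma Dyck_last_prime_factor:
  assumes "w \<in> Dyck M" "w \<noteq> []"
  shows "\<exists>u e. w = u @ e \<and> u \<in> Dyck M \<and> e \<in> prime_Dyck M"
proof -
  have "dyck_prefix w []"
    using assms(1) dyck_prefix_if_red by (simp add: Dyck_def)
  then obtain a v b where v: "dyck_prefix v [a]" "w = v @ [b]" "matches a b"
    using assms(2) by (cases rule: dyck_prefix.cases) auto
  obtain u v' where u: "v = u @ a # v'" "dyck_prefix u []" "dyck_prefix v' []"
    using dyck_prefix_split_bottom[of v "[]" a] v(1) by auto
  have "u \<in> Dyck M" "v' \<in> Dyck M" "(a, b) \<in> bracket_pairs M"
    using assms(1) u v dyck_prefix_run[of _ "[]" "[]"]
    by (auto simp: Dyck_def bracket_pairs_iff red_def)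
  moreover have "w = u @ (a # v' @ [b])"
    using u(1) v(2) by simp
  ultimately show ?thesis
    unfolding prime_Dyck_def by blast
qed

lemma inj_on_append_Dyck_prime_Dyck: "inj_on (\<lambda>(u, e). u @ e) (Dyck M \<times> prime_Dyck M)"
proof -
  have no_overlap: "x = []"
    if "u \<in> Dyck M" "u @ x \<in> Dyck M" "x @ e \<in> prime_Dyck M" "e \<in> prime_Dyck M" for u x e
  proof (rule ccontr)
    assume "x \<noteq> []"
    moreover have "red x = Some []"
      using that(1,2) by (simp add: Dyck_def red_def)
    moreover have "e \<noteq> []"
      using that(4) by (auto simp: prime_Dyck_def)
    ultimately show False
      using prime_Dyck_no_Dyck_prefix[OF that(3)] by blast
  qed
  show ?thesis
  proof (rule inj_onI, clarify)
    fix u e u' e'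
    assume "u \<in> Dyck M" "e \<in> prime_Dyck M" "u' \<in> Dyck M" "e' \<in> prime_Dyck M" "u @ e = u' @ e'"
    moreover obtain x where "u = u' @ x \<and> x @ e = e' \<or> u @ x = u' \<and> e = x @ e'"
      using \<open>u @ e = u' @ e'\<close> by (auto simp: append_eq_append_conv2)
    ultimately show "u = u' \<and> e = e'"
      using no_overlap[of u' x e] no_overlap[of u x e'] by auto
  qed
qed

lemma Dyck_factorization:
  "Dyck M - {[]} = {u @ e | u e. u \<in> Dyck M \<and> e \<in> prime_Dyck M}"
proof
  show "Dyck M - {[]} \<subseteq> {u @ e | u e. u \<in> Dyck M \<and> e \<in> prime_Dyck M}"
    using Dyck_last_prime_factor by blast
  have "[] \<notin> prime_Dyck M"
    by (auto simp: prime_Dyck_def)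
  then show "{u @ e | u e. u \<in> Dyck M \<and> e \<in> prime_Dyck M} \<subseteq> Dyck M - {[]}"
    using prime_Dyck_subset_Dyck Dyck_append by blast
qed

lemma nth_concat_replicate:
  "k < K * length w \<Longrightarrow> concat (replicate K w) ! k = w ! (k mod length w)"
proof (induction K arbitrary: k)
  case (Suc K)
  then show ?case
    by (cases "k < length w") (auto simp: nth_append le_mod_geq)
qed simp

lemma red_concat_replicate: "red w = Some [] \<Longrightarrow> red (concat (replicate K w)) = Some []"
  by (induction K) (simp_all add: red_append_one)

lemma periodic_segment_factor:
  assumes "w \<noteq> []"
  shows "\<exists>K u v. concat (replicate K w) = u @ map (\<lambda>k. w ! nat (k mod int (length w))) [i..j] @ v"
proof -
  define n where "n = length w"
  define r where "r = nat (i mod int n)"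
  define L where "L = nat (j - i + 1)"
  define K where "K = (r + L) div n + 1"
  define W where "W = concat (replicate K w)"
  have n: "n > 0"
    using assms by (simp add: n_def)
  have "r + L < (r + L) div n * n + n"
    using mod_less_divisor[OF n, of "r + L"] div_mult_mod_eq[of "r + L" n] by linarith
  then have len: "r + L \<le> K * n"
    by (simp add: K_def)
  have lenW: "length W = K * n"
    by (simp add: W_def n_def length_concat sum_list_replicate)
  have ir: "int r = i mod int n"
    using n by (simp add: r_def)
  have "map (\<lambda>k. w ! nat (k mod int n)) [i..j] = take L (drop r W)"
  proof (rule nth_equalityI)
    fix k assume "k < length (map (\<lambda>k. w ! nat (k mod int n)) [i..j])"
    then have k: "k < L"
      by (simp add: L_def)
    have "(i + int k) mod int n = int ((r + k) mod n)"
      by (simp add: ir of_nat_mod mod_add_left_eq)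
    then have "map (\<lambda>k. w ! nat (k mod int n)) [i..j] ! k = w ! ((r + k) mod n)"
      using k by (simp add: L_def)
    also have "\<dots> = W ! (r + k)"
      using k len by (simp add: W_def n_def nth_concat_replicate)
    also have "\<dots> = take L (drop r W) ! k"
      using k len lenW by (simp add: nth_drop)
    finally show "map (\<lambda>k. w ! nat (k mod int n)) [i..j] ! k = take L (drop r W) ! k" .
  qed (use len lenW in \<open>simp add: L_def\<close>)
  moreover have "W = take r W @ take L (drop r W) @ drop L (drop r W)"
    by (simp only: append_take_drop_id)
  ultimately show ?thesis
    unfolding W_def n_def by metis
qed

lemma Dyck_in_blocks:
  assumes "w \<in> Dyck M" "w \<noteq> []"
  shows "w \<in> blocks M"
proof -
  define x where "x = (\<lambda>i::int. w ! nat (i mod int (length w)))"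
  have "x i \<in> Sigma1 M" for i
  proof -
    have "nat (i mod int (length w)) < length w"
      using assms(2) by (simp add: nat_less_iff)
    then have "x i \<in> set w"
      unfolding x_def by (rule nth_mem)
    then show ?thesis
      using assms(1) by (auto simp: Dyck_def)
  qed
  moreover have "red (map x [i..j]) \<noteq> None" for i j
  proof
    assume "red (map x [i..j]) = None"
    moreover obtain K u v where "concat (replicate K w) = u @ map x [i..j] @ v"
      using periodic_segment_factor[OF assms(2)] unfolding x_def by blast
    ultimately have "red (concat (replicate K w)) = None"
      using red_None_factor by simp
    then show False
      using assms(1) red_concat_replicate by (simp add: Dyck_def)
  qed
  ultimately have "x \<in> XM M"
    by (simp add: XM_def)
  moreover have "w = map (\<lambda>k. x (0 + int k)) [0..<length w]"
    by (rule nth_equalityI) (auto simp: x_def)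
  ultimately show ?thesis
    unfolding blocks_def by blast
qed

lemma set_block_subset: "w \<in> blocks M \<Longrightarrow> set w \<subseteq> Sigma1 M"
proof -
  assume "w \<in> blocks M"
  then obtain x i n where "x \<in> XM M" "w = map (\<lambda>k. x (i + int k)) [0..<n]"
    unfolding blocks_def by blast
  then show ?thesis
    by (auto simp: XM_def)
qed

lemma codeE_eq_prime_Dyck: "codeE M = prime_Dyck M"
proof
  show "codeE M \<subseteq> prime_Dyck M"
  proof
    fix w assume "w \<in> codeE M"
    then obtain a v b where w: "w \<in> blocks M" "w = a # v @ [b]" "a \<in> {Lam, Xi}"
      "b \<in> Rho ` {1..M} \<union> Eta ` {1..M}" "red [a, b] = Some []" "red v = Some []"
      unfolding codeE_def by blast
    have "(a, b) \<in> bracket_pairs M"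
      using w(3-5) by (auto simp: bracket_pairs_def red_def)
    moreover have "v \<in> Dyck M"
      using set_block_subset[OF w(1)] w(2,6) by (simp add: Dyck_def)
    ultimately show "w \<in> prime_Dyck M"
      using w(2) unfolding prime_Dyck_def by blast
  qed
  show "prime_Dyck M \<subseteq> codeE M"
  proof
    fix w assume w_prime: "w \<in> prime_Dyck M"
    then obtain a b v where w: "w = a # v @ [b]" "(a, b) \<in> bracket_pairs M" "v \<in> Dyck M"
      unfolding prime_Dyck_def by blast
    have "w \<in> blocks M"
      using Dyck_in_blocks prime_Dyck_subset_Dyck w_prime w(1) by blast
    moreover have "a \<in> {Lam, Xi}" "b \<in> Rho ` {1..M} \<union> Eta ` {1..M}" "red [a, b] = Some []"
      using w(2) by (auto simp: bracket_pairs_def red_def)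
    moreover have "red v = Some []"
      using w(3) by (simp add: Dyck_def)
    ultimately show "w \<in> codeE M"
      unfolding codeE_def using w(1) by blast
  qed
qed

lemma finite_length_slice_Dyck: "finite {w \<in> Dyck M. length w = n}"
  by (rule finite_subset[OF _ finite_lists_length_eq[of "Sigma1 M" n]])
     (auto simp: Dyck_def Sigma1_def)

lemma finite_length_slice_prime_Dyck: "finite {e \<in> prime_Dyck M. length e = n}"
  by (rule finite_subset[OF _ finite_length_slice_Dyck[of M n]]) (use prime_Dyck_subset_Dyck in blast)

lemma genfun_remove_Nil: "[] \<in> A \<Longrightarrow> genfun A = 1 + genfun (A - {[]})"
proof (rule fps_ext)
  fix n assume "[] \<in> A"
  then have "{u \<in> A. length u = 0} = {[]}"
    by auto
  moreover have "{u \<in> A - {[]}. length u = Suc m} = {u \<in> A. length u = Suc m}" for m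
    by auto
  ultimately show "fps_nth (genfun A) n = fps_nth (1 + genfun (A - {[]})) n"
    by (cases n) (simp_all add: genfun_def)
qed

lemma genfun_concat:
  assumes inj: "inj_on (\<lambda>(u, v). u @ v) (A \<times> B)"
    and finA: "\<And>n. finite {u \<in> A. length u = n}" and finB: "\<And>n. finite {v \<in> B. length v = n}"
  shows "genfun {u @ v | u v. u \<in> A \<and> v \<in> B} = genfun A * genfun B"
proof (rule fps_ext)
  fix n
  let ?A = "\<lambda>k. {u \<in> A. length u = k}" and ?B = "\<lambda>k. {v \<in> B. length v = k}"
  have "{w \<in> {u @ v | u v. u \<in> A \<and> v \<in> B}. length w = n}
      = (\<lambda>(u, v). u @ v) ` (\<Union>k\<le>n. ?A k \<times> ?B (n - k))"
    by auto
  moreover have "inj_on (\<lambda>(u, v). u @ v) (\<Union>k\<le>n. ?A k \<times> ?B (n - k))"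
    by (rule inj_on_subset[OF inj]) auto
  ultimately have "card {w \<in> {u @ v | u v. u \<in> A \<and> v \<in> B}. length w = n}
      = card (\<Union>k\<le>n. ?A k \<times> ?B (n - k))"
    by (simp add: card_image)
  also have "\<dots> = (\<Sum>k\<le>n. card (?A k) * card (?B (n - k)))"
    by (subst card_UN_disjoint) (auto simp: finA finB card_cartesian_product)
  finally show "fps_nth (genfun {u @ v | u v. u \<in> A \<and> v \<in> B}) n = fps_nth (genfun A * genfun B) n"
    by (simp add: genfun_def fps_mult_nth atLeast0AtMost)
qed

lemma genfun_enclose:
  "genfun {a # v @ [b] | a b v. (a, b) \<in> P \<and> v \<in> D}
     = fps_const (real (card P)) * fps_X ^ 2 * genfun D"
proof (rule fps_ext)
  fix n
  let ?E = "{a # v @ [b] | a b v. (a, b) \<in> P \<and> v \<in> D}"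
  have long: "fps_nth (genfun ?E) (m + 2) = real (card P) * fps_nth (genfun D) m" for m
  proof -
    have "{w \<in> ?E. length w = m + 2}
        = (\<lambda>((a, b), v). a # v @ [b]) ` (P \<times> {v \<in> D. length v = m})"
      by (auto intro!: image_eqI)
    moreover have "inj_on (\<lambda>((a, b), v). a # v @ [b]) (P \<times> {v \<in> D. length v = m})"
      by (auto simp: inj_on_def)
    ultimately show ?thesis
      by (simp add: genfun_def card_image card_cartesian_product)
  qed
  have short: "fps_nth (genfun ?E) k = 0" if "k < 2" for k
  proof -
    have empty: "{w \<in> ?E. length w = k} = {}"
      using that by auto
    show ?thesis
      unfolding genfun_def fps_nth_Abs_fps empty by simp
  qed
  show "fps_nth (genfun ?E) n = fps_nth (fps_const (real (card P)) * fps_X ^ 2 * genfun D) n"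
  proof (cases "n < 2")
    case True
    then show ?thesis
      using short by (simp add: mult.assoc fps_X_power_mult_nth)
  next
    case False
    then obtain m where "n = m + 2"
      by (metis add.commute le_add_diff_inverse not_less)
    then show ?thesis
      using long by (simp add: mult.assoc fps_X_power_mult_nth)
  qed
qed

lemma fps_quadratic_root:
  fixes G :: "'a::field_char_0 fps"
  assumes quadratic: "G * G = G - fps_const c * fps_X ^ 2" and "fps_nth G 0 = 0"
  shows "G = fps_const (1/2) * (1 - fps_radical (\<lambda>_ _. 1) 2 (1 - fps_const (4 * c) * fps_X ^ 2))"
proof -
  define A where "A = 1 - 2 * G"
  have "A ^ 2 = 1 - 4 * G + 4 * (G * G)"
    by (simp add: A_def power2_eq_square algebra_simps)
  also have "\<dots> = 1 - 4 * fps_const c * fps_X ^ 2"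
    by (simp add: quadratic algebra_simps)
  also have "\<dots> = 1 - fps_const (4 * c) * fps_X ^ 2"
    by (simp add: fps_numeral_fps_const)
  finally have "A ^ 2 = 1 - fps_const (4 * c) * fps_X ^ 2" .
  moreover have "fps_nth A 0 = 1"
    using assms(2) by (simp add: A_def)
  ultimately have "A = fps_radical (\<lambda>_ _. 1) 2 (1 - fps_const (4 * c) * fps_X ^ 2)"
    using radical_unique[where r = "\<lambda>_ _. 1" and k = 1 and a = A, unfolded Suc_1] by simp
  moreover have "G = fps_const (1/2) * (1 - A)"
    by (simp add: A_def fps_numeral_fps_const flip: mult.assoc)
  ultimately show ?thesis
    by simp
qed

lemma fps_root_of_first_return_equations:
  fixes G D :: "'a::field_char_0 fps"
  assumes G: "G = fps_const c * fps_X ^ 2 * D" and D: "D = 1 + D * G"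
  shows "G = fps_const (1/2) * (1 - fps_radical (\<lambda>_ _. 1) 2 (1 - fps_const (4 * c) * fps_X ^ 2))"
proof (rule fps_quadratic_root)
  have "G = fps_const c * fps_X ^ 2 * (1 + D * G)"
    by (subst D[symmetric]) (fact G)
  also have "\<dots> = fps_const c * fps_X ^ 2 + G * G"
    using G by (simp add: algebra_simps)
  finally show "G * G = G - fps_const c * fps_X ^ 2"
    by (metis add_diff_cancel_left')
  show "fps_nth G 0 = 0"
    using G by simp
qed

theorem lemma3p2:
  fixes M :: nat
  shows "genfun (codeE M) =
    fps_const (1/2) * (1 - fps_radical (\<lambda>_ _. 1) 2 (1 - fps_const (8 * real M) * fps_X ^ 2))"
proof -
  have prime: "genfun (prime_Dyck M) = fps_const (2 * real M) * fps_X ^ 2 * genfun (Dyck M)"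
    using genfun_enclose[of "bracket_pairs M" "Dyck M"]
    by (simp add: prime_Dyck_def card_bracket_pairs)
  have Dyck: "genfun (Dyck M) = 1 + genfun (Dyck M) * genfun (prime_Dyck M)"
  proof -
    have "genfun (Dyck M) = 1 + genfun (Dyck M - {[]})"
      by (rule genfun_remove_Nil[OF Nil_in_Dyck])
    also have "\<dots> = 1 + genfun (Dyck M) * genfun (prime_Dyck M)"
      unfolding Dyck_factorization
      using genfun_concat[OF inj_on_append_Dyck_prime_Dyck finite_length_slice_Dyck
          finite_length_slice_prime_Dyck] by simp
    finally show ?thesis .
  qed
  show ?thesis
    using fps_root_of_first_return_equations[OF prime Dyck] by (simp add: codeE_eq_prime_Dyck)
qed

end
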